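(* Let $\Sigma$ be a Riemann surface and let $I_1,I_2$ be clean subsets of $\Sigma_{\mathbb{C}}$. Then $I_1\cup I_2$ is clean if and only if at least one of the following holds: (1) $I_1$ and $I_2$ are both conjugation invariant; (2) $I_i\cap\overline{I_j}=\emptyset$ for all $1\le i,j\le 2$; (3) $I_1=\overline{I_2}$; (4) $I_1\subset I_2$ or $I_2\subset I_1$.
   Context: For a Riemann surface $(\Sigma,j)$ write $\overline{\Sigma}=(\Sigma,-j)$. The complex double $\Sigma_{\mathbb{C}}=\Sigma\cup\overline{\Sigma}$ is obtained by gluing along the boundary by the identity, with complex structure restricting to $j$ on $\Sigma$ and $-j$ on $\overline\Sigma$; it carries an anti-holomorphic involution $z\mapsto\bar z$ exchanging the two copies, and for $S\subset\Sigma_{\mathbb{C}}$, $\overline S$ denotes its image. $S$ is conjugation invariant if $S=\overline S$, and clean if either $S=\overline{S}$ or $S\cap\overline{S}=\emptyset$. *)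

theory Defs
  imports Main
begin

(* Points of the complex double Sigma_C = Sigma \<union> conj Sigma, glued along the boundary Bd.
   A point is (x, b): x \<in> Sigma, b = True for the copy Sigma, b = False for the conjugate copy.
   Boundary points are identified, represented canonically by (x, True). *)
definition cdouble :: "'a set \<Rightarrow> 'a set \<Rightarrow> ('a \<times> bool) set" where
  "cdouble Sig Bd = {(x, b). x \<in> Sig \<and> (x \<in> Bd \<longrightarrow> b)}"

(* the anti-holomorphic involution z \<mapsto> conj z exchanging the two copies, fixing the boundary *)
definition conj_pt :: "'a set \<Rightarrow> 'a \<times> bool \<Rightarrow> 'a \<times> bool" where
  "conj_pt Bd p = (if fst p \<in> Bd then p else (fst p, \<not> snd p))"

definition conj_set :: "'a set \<Rightarrow> ('a \<times> bool) set \<Rightarrow> ('a \<times> bool) set" where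
  "conj_set Bd S = conj_pt Bd ` S"

definition conj_invariant :: "'a set \<Rightarrow> ('a \<times> bool) set \<Rightarrow> bool" where
  "conj_invariant Bd S \<longleftrightarrow> S = conj_set Bd S"

definition clean :: "'a set \<Rightarrow> ('a \<times> bool) set \<Rightarrow> bool" where
  "clean Bd S \<longleftrightarrow> S = conj_set Bd S \<or> S \<inter> conj_set Bd S = {}"

end

theory Submission
  imports Defs
begin

text \<open>Only the fact that conjugation is an involution matters. For an involution \<open>f\<close> the image
  \<open>f ` S\<close> coincides with the preimage \<open>f -` S\<close>, so all conditions become pointwise: a clean set is
  either a union of orbits \<open>{x, f x}\<close> or meets every orbit in at most one point. If \<open>A \<union> B\<close> is
  invariant, then an orbit meeting a non-invariant clean set \<open>B\<close> must lie in \<open>A \<union> B\<close> with exactly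
  one point in \<open>B\<close>; so \<open>B \<subseteq> A\<close> when \<open>A\<close> is invariant, and \<open>A = f ` B\<close> when neither set is.
  If \<open>A \<union> B\<close> meets its image in nothing, condition (2) is just this unfolded.\<close>

lemma image_involution_eq_vimage:
  assumes "\<And>x. f (f x) = x"
  shows "f ` S = f -` S"
  using assms by (auto intro: rev_image_eqI[where x = "f _"])

lemma conj_pt_conj_pt: "conj_pt Bd (conj_pt Bd p) = p"
  by (cases p) (auto simp: conj_pt_def)

lemma subset_of_invariant_if_invariant_Un:
  assumes "\<And>x. f (f x) = x"
    and "A = f ` A" and "B \<inter> f ` B = {}" and "A \<union> B = f ` (A \<union> B)"
  shows "B \<subseteq> A"
  using assms(2-) unfolding image_involution_eq_vimage[OF assms(1)] by blast

lemma eq_mirror_if_invariant_Un: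
  assumes inv: "\<And>x. f (f x) = x"
    and "A \<inter> f ` A = {}" and "B \<inter> f ` B = {}" and "A \<union> B = f ` (A \<union> B)"
  shows "A = f ` B"
proof -
  have "x \<in> A \<longleftrightarrow> f x \<in> B" for x
    using assms(2-) inv[of x] unfolding image_involution_eq_vimage[OF inv] by blast
  then show ?thesis
    unfolding image_involution_eq_vimage[OF inv] by blast
qed

lemma clean_Un_iff_involution:
  assumes inv: "\<And>x. f (f x) = x"
    and clean_A: "A = f ` A \<or> A \<inter> f ` A = {}"
    and clean_B: "B = f ` B \<or> B \<inter> f ` B = {}"
  shows "(A \<union> B = f ` (A \<union> B) \<or> (A \<union> B) \<inter> f ` (A \<union> B) = {}) \<longleftrightarrow>
          ((A = f ` A \<and> B = f ` B)
           \<or> (A \<inter> f ` A = {} \<and> A \<inter> f ` B = {} \<and> B \<inter> f ` A = {} \<and> B \<inter> f ` B = {})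
           \<or> A = f ` B \<or> A \<subseteq> B \<or> B \<subseteq> A)"
    (is "?clean_Un \<longleftrightarrow> ?cases")
proof
  assume ?clean_Un
  then consider (invariant) "A \<union> B = f ` (A \<union> B)" | (free) "(A \<union> B) \<inter> f ` (A \<union> B) = {}"
    by blast
  then show ?cases
  proof cases
    case invariant
    from clean_A clean_B show ?thesis
      using subset_of_invariant_if_invariant_Un[OF inv _ _ invariant]
        subset_of_invariant_if_invariant_Un[OF inv _ _ invariant[unfolded Un_commute[of A]]]
        eq_mirror_if_invariant_Un[OF inv _ _ invariant]
      by blast
  next
    case free
    then show ?thesis
      unfolding image_Un by blast
  qed
next
  assume ?cases
  then show ?clean_Un
  proof (elim disjE)
    assume "A = f ` A \<and> B = f ` B"
    then show ?thesis
      by (metis image_Un)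
  next
    assume "A \<inter> f ` A = {} \<and> A \<inter> f ` B = {} \<and> B \<inter> f ` A = {} \<and> B \<inter> f ` B = {}"
    then show ?thesis
      unfolding image_Un by blast
  next
    assume mirror: "A = f ` B"
    then have "f ` A = B"
      using inv by (simp add: image_image)
    with mirror show ?thesis
      by (simp add: image_Un Un_commute)
  next
    assume "A \<subseteq> B"
    with clean_B show ?thesis
      by (simp add: sup.absorb2)
  next
    assume "B \<subseteq> A"
    with clean_A show ?thesis
      by (simp add: sup.absorb1)
  qed
qed

theorem lemma2p7:
  fixes Sig Bd :: "'a set" and I1 I2 :: "('a \<times> bool) set"
  assumes "Bd \<subseteq> Sig"
    and "I1 \<subseteq> cdouble Sig Bd" and "I2 \<subseteq> cdouble Sig Bd"
    and "clean Bd I1" and "clean Bd I2"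
  shows "clean Bd (I1 \<union> I2) \<longleftrightarrow>
          ((conj_invariant Bd I1 \<and> conj_invariant Bd I2)
           \<or> (I1 \<inter> conj_set Bd I1 = {} \<and> I1 \<inter> conj_set Bd I2 = {}
              \<and> I2 \<inter> conj_set Bd I1 = {} \<and> I2 \<inter> conj_set Bd I2 = {})
           \<or> I1 = conj_set Bd I2
           \<or> I1 \<subseteq> I2 \<or> I2 \<subseteq> I1)"
  using assms(4,5) unfolding clean_def conj_invariant_def conj_set_def
  by (rule clean_Un_iff_involution[OF conj_pt_conj_pt])

end
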